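(* Let $\mathcal C=\{\hat\mu_1,\dots,\hat\mu_{k'}\}\subset\mathbb{R}^n$ with Voronoi partition $V_1,\dots,V_{k'}$, let $\sigma>0$, $R\ge0$, $\epsilon\in(0,1)$, and let $\mu\in\mathbb{R}^n$ satisfy $\|\mu-\hat\mu_i\|\le R$ for some $i$. Let $Y=\mu+\sigma\xi$ with $\xi\sim\mathcal N(0,I_n)$, and let $i'$ be the (random) index with $Y\in V_{i'}$. Then with probability at least $1-\epsilon$, $$\|\mu-\hat\mu_{i'}\|\le3R+2\sqrt2\,\sigma\sqrt{\ln(k'/\epsilon)}.$$
   Context: The Voronoi partition of $\{\hat\mu_1,\dots,\hat\mu_{k'}\}$ is $V_j=\{x:\|x-\hat\mu_j\|=\min_{j'}\|x-\hat\mu_{j'}\|\}$, with ties (a null set) broken arbitrarily so that the $V_j$ partition $\mathbb{R}^n$. *)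

theory Defs
  imports "HOL-Analysis.Analysis" "HOL-Probability.Probability"
begin

definition std_gaussian :: "(real ^ 'n::finite) measure" where
  "std_gaussian = density lborel
     (\<lambda>x. ennreal ((2 * pi) powr (- real CARD('n) / 2) * exp (- (norm x)\<^sup>2 / 2)))"

definition voronoi_partition ::
  "nat \<Rightarrow> (nat \<Rightarrow> 'a::real_normed_vector) \<Rightarrow> (nat \<Rightarrow> 'a set) \<Rightarrow> bool" where
  "voronoi_partition k c V \<longleftrightarrow>
     (\<forall>x. \<exists>!j. j < k \<and> x \<in> V j) \<and>
     (\<forall>j<k. \<forall>x\<in>V j. \<forall>j'<k. norm (x - c j) \<le> norm (x - c j'))"

end

theory Submission
  imports Defs
begin

text \<open>Fix a center \<open>\<mu>\<^sub>i\<close> with \<open>\<parallel>\<mu> - \<mu>\<^sub>i\<parallel> \<le> R\<close>. If \<open>Y = \<mu> + \<sigma>\<xi>\<close> lies in the cell of \<open>\<mu>\<^sub>j\<close>, then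
  \<open>\<parallel>Y - \<mu>\<^sub>j\<parallel> \<le> \<parallel>Y - \<mu>\<^sub>i\<parallel>\<close>; expanding the squares and using \<open>\<parallel>\<mu>\<^sub>j - \<mu>\<^sub>i\<parallel> \<le> \<parallel>\<mu> - \<mu>\<^sub>j\<parallel> + R\<close> gives
  \<open>\<parallel>\<mu> - \<mu>\<^sub>j\<parallel> \<le> R + 2\<sigma>t\<close> whenever the component of \<open>\<xi>\<close> along \<open>\<mu>\<^sub>j - \<mu>\<^sub>i\<close> is below \<open>t\<close>.
  A standard Gaussian exceeds \<open>t\<close> in a fixed unit direction with probability at most
  \<open>exp (-t\<^sup>2/2)\<close> (Chernoff bound, computed by shifting the density), so a union bound over
  the \<open>k'\<close> directions with \<open>t = \<surd>(2 ln (k'/\<epsilon>))\<close> gives the claim, even with \<open>R\<close> for \<open>3R\<close>.\<close>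

definition gaussian_density :: "'a::euclidean_space \<Rightarrow> real" where
  "gaussian_density x = (2 * pi) powr (- real DIM('a) / 2) * exp (- (norm x)\<^sup>2 / 2)"

lemma gaussian_density_nonneg [simp]: "gaussian_density x \<ge> 0"
  by (simp add: gaussian_density_def)

lemma gaussian_density_measurable [measurable]: "gaussian_density \<in> borel_measurable borel"
  unfolding gaussian_density_def by measurable

lemma nn_integral_exp_neg_square_half:
  "(\<integral>\<^sup>+y. ennreal (exp (- y\<^sup>2 / 2)) \<partial>lborel) = ennreal (sqrt (2 * pi))"
proof -
  have "(\<lambda>y. ennreal (exp (- y\<^sup>2 / 2))) = (\<lambda>y. ennreal (sqrt (2 * pi)) * ennreal (std_normal_density y))"
    by (auto simp: std_normal_density_def ennreal_mult'[symmetric] fun_eq_iff)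
  moreover have "(\<integral>\<^sup>+y. ennreal (std_normal_density y) \<partial>lborel) = 1"
    by (subst nn_integral_eq_integral) auto
  ultimately show ?thesis
    by (simp add: nn_integral_cmult)
qed

lemma exp_neg_norm_square_half_eq_prod:
  fixes x :: "'a::euclidean_space"
  shows "exp (- (norm x)\<^sup>2 / 2) = (\<Prod>b\<in>Basis. exp (- (x \<bullet> b)\<^sup>2 / 2))"
proof -
  have "(norm x)\<^sup>2 = (\<Sum>b\<in>Basis. (x \<bullet> b)\<^sup>2)"
    unfolding power2_norm_eq_inner euclidean_inner[of x x] by (simp only: power2_eq_square)
  then have "- (norm x)\<^sup>2 / 2 = (\<Sum>b\<in>Basis. - (x \<bullet> b)\<^sup>2 / 2)"
    by (simp add: sum_negf sum_divide_distrib)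
  then show ?thesis
    by (simp add: exp_sum)
qed

lemma nn_integral_exp_neg_norm_square_half:
  "(\<integral>\<^sup>+x. ennreal (exp (- (norm (x::'a::euclidean_space))\<^sup>2 / 2)) \<partial>lborel)
     = ennreal (sqrt (2 * pi) ^ DIM('a))"
proof -
  have "(\<integral>\<^sup>+x. ennreal (exp (- (norm (x::'a))\<^sup>2 / 2)) \<partial>lborel)
      = (\<integral>\<^sup>+x. (\<Prod>b\<in>Basis. ennreal (exp (- ((x::'a) \<bullet> b)\<^sup>2 / 2))) \<partial>lborel)"
    unfolding exp_neg_norm_square_half_eq_prod by (simp add: prod_ennreal)
  also have "\<dots> = (\<Prod>b\<in>(Basis::'a set). \<integral>\<^sup>+y. ennreal (exp (- y\<^sup>2 / 2)) \<partial>lborel)"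
    by (rule nn_integral_lborel_prod) auto
  also have "\<dots> = ennreal (sqrt (2 * pi) ^ DIM('a))"
    unfolding nn_integral_exp_neg_square_half prod_constant by (simp add: ennreal_power)
  finally show ?thesis .
qed

lemma sqrt_power_eq_powr: "x > 0 \<Longrightarrow> sqrt x ^ n = x powr (real n / 2)"
  by (simp add: powr_half_sqrt[symmetric] powr_realpow[symmetric] powr_powr)

lemma nn_integral_gaussian_density:
  "(\<integral>\<^sup>+x. ennreal (gaussian_density (x::'a::euclidean_space)) \<partial>lborel) = 1"
proof -
  define C where "C = (2 * pi) powr (- real DIM('a) / 2)"
  have "(\<integral>\<^sup>+x. ennreal (gaussian_density (x::'a)) \<partial>lborel)
      = (\<integral>\<^sup>+x. ennreal C * ennreal (exp (- (norm (x::'a))\<^sup>2 / 2)) \<partial>lborel)"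
    by (simp add: gaussian_density_def C_def ennreal_mult)
  also have "\<dots> = ennreal C * (\<integral>\<^sup>+x. ennreal (exp (- (norm (x::'a))\<^sup>2 / 2)) \<partial>lborel)"
    by (rule nn_integral_cmult) measurable
  also have "\<dots> = ennreal C * ennreal (sqrt (2 * pi) ^ DIM('a))"
    by (simp only: nn_integral_exp_neg_norm_square_half)
  also have "\<dots> = ennreal (C * sqrt (2 * pi) ^ DIM('a))"
    by (rule ennreal_mult[symmetric]) (simp_all add: C_def)
  also have "C * sqrt (2 * pi) ^ DIM('a) = 1"
    by (simp add: C_def sqrt_power_eq_powr powr_add[symmetric])
  finally show ?thesis
    by simp
qed

lemma prob_space_gaussian: "prob_space (density lborel (gaussian_density :: 'a::euclidean_space \<Rightarrow> real))"
  by (rule prob_spaceI) (simp add: emeasure_density nn_integral_gaussian_density)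

lemma nn_integral_lborel_translate:
  fixes f :: "'a::euclidean_space \<Rightarrow> ennreal"
  assumes [measurable]: "f \<in> borel_measurable borel"
  shows "(\<integral>\<^sup>+x. f (x - c) \<partial>lborel) = (\<integral>\<^sup>+x. f x \<partial>lborel)"
  by (subst (2) lborel_distr_plus[of "- c", symmetric]) (simp add: nn_integral_distr)

lemma emeasure_gaussian_halfspace_le:
  fixes u :: "'a::euclidean_space"
  assumes "norm u \<le> 1" and "t \<ge> 0"
  shows "emeasure (density lborel gaussian_density) {x. t \<le> x \<bullet> u} \<le> ennreal (exp (- t\<^sup>2 / 2))"
proof -
  define s where "s = t\<^sup>2 * (norm u)\<^sup>2 / 2 - t\<^sup>2"
  have tilt: "gaussian_density x * exp (t * (x \<bullet> u) - t\<^sup>2) = exp s * gaussian_density (x - t *\<^sub>R u)"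
    for x :: 'a
  proof -
    have "(norm (x - t *\<^sub>R u))\<^sup>2 = (norm x)\<^sup>2 - 2 * t * (x \<bullet> u) + t\<^sup>2 * (norm u)\<^sup>2"
      unfolding power2_norm_eq_inner
      by (simp add: inner_diff_left inner_diff_right inner_commute power2_eq_square algebra_simps)
    then have exponent: "- (norm x)\<^sup>2 / 2 + (t * (x \<bullet> u) - t\<^sup>2) = s + - (norm (x - t *\<^sub>R u))\<^sup>2 / 2"
      unfolding s_def by linarith
    have "gaussian_density x * exp (t * (x \<bullet> u) - t\<^sup>2)
        = (2 * pi) powr (- real DIM('a) / 2) * exp (- (norm x)\<^sup>2 / 2 + (t * (x \<bullet> u) - t\<^sup>2))"
      by (simp only: gaussian_density_def exp_add mult.assoc)
    also have "\<dots> = (2 * pi) powr (- real DIM('a) / 2) * exp (s + - (norm (x - t *\<^sub>R u))\<^sup>2 / 2)"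
      by (simp only: exponent)
    also have "\<dots> = exp s * gaussian_density (x - t *\<^sub>R u)"
      by (simp only: gaussian_density_def exp_add mult.left_commute)
    finally show ?thesis .
  qed
  have markov: "indicator {x. t \<le> x \<bullet> u} x \<le> ennreal (exp (t * (x \<bullet> u) - t\<^sup>2))" for x :: 'a
  proof (cases "t \<le> x \<bullet> u")
    case True
    then have "t * t \<le> t * (x \<bullet> u)"
      using assms(2) by (rule mult_left_mono)
    then show ?thesis
      using True by (simp add: power2_eq_square)
  qed simp
  have "(norm u)\<^sup>2 \<le> 1"
    using assms(1) by (simp add: power_le_one)
  then have "t\<^sup>2 * (norm u)\<^sup>2 \<le> t\<^sup>2"
    using mult_left_mono[of "(norm u)\<^sup>2" 1 "t\<^sup>2"] by simp
  then have "s \<le> - t\<^sup>2 / 2"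
    by (simp add: s_def)
  have "emeasure (density lborel gaussian_density) {x. t \<le> x \<bullet> u}
      = (\<integral>\<^sup>+x. ennreal (gaussian_density x) * indicator {x. t \<le> x \<bullet> u} x \<partial>lborel)"
    by (rule emeasure_density) measurable
  also have "\<dots> \<le> (\<integral>\<^sup>+x. ennreal (gaussian_density x * exp (t * (x \<bullet> u) - t\<^sup>2)) \<partial>lborel)"
    using mult_left_mono[OF markov] by (intro nn_integral_mono) (simp add: ennreal_mult')
  also have "\<dots> = (\<integral>\<^sup>+x. ennreal (exp s) * ennreal (gaussian_density (x - t *\<^sub>R u)) \<partial>lborel)"
    by (simp add: tilt ennreal_mult')
  also have "\<dots> = ennreal (exp s) * (\<integral>\<^sup>+x. ennreal (gaussian_density (x - t *\<^sub>R u)) \<partial>lborel)"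
    by (rule nn_integral_cmult) measurable
  also have "\<dots> = ennreal (exp s)"
    using nn_integral_lborel_translate[of "\<lambda>x. ennreal (gaussian_density x)" "t *\<^sub>R u"]
    by (simp add: nn_integral_gaussian_density)
  also have "\<dots> \<le> ennreal (exp (- t\<^sup>2 / 2))"
    using \<open>s \<le> - t\<^sup>2 / 2\<close> by (simp add: ennreal_leI)
  finally show ?thesis .
qed

lemma measure_gaussian_below_halfspaces:
  fixes u :: "'i \<Rightarrow> 'a::euclidean_space"
  assumes "finite J" and "\<And>j. j \<in> J \<Longrightarrow> norm (u j) \<le> 1" and "t \<ge> 0"
  shows "measure (density lborel gaussian_density) {x. \<forall>j\<in>J. x \<bullet> u j < t}
           \<ge> 1 - real (card J) * exp (- t\<^sup>2 / 2)"
proof -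
  let ?M = "density lborel (gaussian_density :: 'a \<Rightarrow> real)"
  interpret gaussian: prob_space ?M
    by (rule prob_space_gaussian)
  have halfspace: "measure ?M {x. t \<le> x \<bullet> u j} \<le> exp (- t\<^sup>2 / 2)" if "j \<in> J" for j
    using emeasure_gaussian_halfspace_le[OF assms(2)[OF that] assms(3)]
    by (simp add: gaussian.emeasure_eq_measure)
  have "measure ?M (\<Union>j\<in>J. {x. t \<le> x \<bullet> u j}) \<le> (\<Sum>j\<in>J. measure ?M {x. t \<le> x \<bullet> u j})"
    by (rule gaussian.finite_measure_subadditive_finite) (use assms(1) in auto)
  also have "\<dots> \<le> real (card J) * exp (- t\<^sup>2 / 2)"
    using sum_mono[OF halfspace] by simp
  moreover have "(\<Union>j\<in>J. {x. t \<le> x \<bullet> u j}) \<in> sets ?M"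
    using assms(1) by (intro sets.finite_UN) auto
  moreover have "{x. \<forall>j\<in>J. x \<bullet> u j < t} = space ?M - (\<Union>j\<in>J. {x. t \<le> x \<bullet> u j})"
    by auto
  ultimately show ?thesis
    using gaussian.prob_compl[of "\<Union>j\<in>J. {x. t \<le> x \<bullet> u j}"] by auto
qed

lemma voronoi_center_dist_le:
  fixes \<mu> ci cj \<xi> :: "'a::real_inner"
  assumes close: "norm (\<mu> - ci) \<le> R"
    and nearer: "norm (\<mu> + \<sigma> *\<^sub>R \<xi> - cj) \<le> norm (\<mu> + \<sigma> *\<^sub>R \<xi> - ci)"
    and component: "\<xi> \<bullet> (cj - ci) \<le> t * norm (cj - ci)"
    and "\<sigma> \<ge> 0" and "t \<ge> 0"
  shows "norm (\<mu> - cj) \<le> R + 2 * \<sigma> * t"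
proof -
  define a where "a = norm (\<mu> - cj)"
  have expand: "(norm (\<mu> + \<sigma> *\<^sub>R \<xi> - c))\<^sup>2
      = (norm (\<mu> - c))\<^sup>2 + 2 * \<sigma> * ((\<mu> - c) \<bullet> \<xi>) + (norm (\<sigma> *\<^sub>R \<xi>))\<^sup>2" for c
    using dot_norm[of "\<mu> - c" "\<sigma> *\<^sub>R \<xi>"] by (simp add: algebra_simps)
  have "(norm (\<mu> + \<sigma> *\<^sub>R \<xi> - cj))\<^sup>2 \<le> (norm (\<mu> + \<sigma> *\<^sub>R \<xi> - ci))\<^sup>2"
    using nearer by (simp add: power_mono)
  then have "a\<^sup>2 \<le> (norm (\<mu> - ci))\<^sup>2 + 2 * \<sigma> * (\<xi> \<bullet> (cj - ci))"
    unfolding expand a_def by (simp add: inner_diff_left inner_diff_right inner_commute algebra_simps)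
  also have "\<dots> \<le> R\<^sup>2 + 2 * \<sigma> * (t * norm (cj - ci))"
    using close component \<open>\<sigma> \<ge> 0\<close> by (intro add_mono mult_left_mono power_mono) auto
  also have "\<dots> \<le> R\<^sup>2 + 2 * \<sigma> * t * (a + R)"
  proof -
    have "norm (cj - ci) \<le> a + R"
      using norm_triangle_ineq4[of "\<mu> - ci" "\<mu> - cj"] close by (simp add: a_def)
    then show ?thesis
      using \<open>\<sigma> \<ge> 0\<close> \<open>t \<ge> 0\<close> by (simp add: mult_left_mono)
  qed
  finally have "(a - R) * (a + R) \<le> (2 * \<sigma> * t) * (a + R)"
    by (simp add: power2_eq_square algebra_simps)
  moreover have "R \<ge> 0"
    using close norm_ge_zero order_trans by blast
  moreover have "a \<ge> 0" "2 * \<sigma> * t \<ge> 0"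
    using \<open>\<sigma> \<ge> 0\<close> \<open>t \<ge> 0\<close> by (simp_all add: a_def)
  ultimately show ?thesis
    unfolding a_def[symmetric] by (cases "a + R = 0") (simp_all add: mult_le_cancel_right)
qed

lemma inner_le_of_inner_sgn_less:
  fixes x v :: "'a::real_inner"
  assumes "x \<bullet> sgn v < t"
  shows "x \<bullet> v \<le> t * norm v"
proof (cases "v = 0")
  case False
  then have "x \<bullet> v = norm v * (x \<bullet> sgn v)"
    by (simp add: sgn_div_norm)
  also have "\<dots> \<le> norm v * t"
    using assms by (intro mult_left_mono) auto
  finally show ?thesis
    by (simp add: mult.commute)
qed simp

lemma std_gaussian_eq_density: "std_gaussian = density lborel gaussian_density"
  by (simp add: std_gaussian_def gaussian_density_def)

theorem lemma5p2:
  fixes c :: "nat \<Rightarrow> real ^ 'n::finite"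
    and V :: "nat \<Rightarrow> (real ^ 'n) set"
    and k :: nat and \<sigma> R \<epsilon> :: real and \<mu> :: "real ^ 'n"
  assumes "k \<ge> 1"
    and "voronoi_partition k c V"
    and "\<sigma> > 0" and "R \<ge> 0" and "0 < \<epsilon>" and "\<epsilon> < 1"
    and "\<exists>i<k. norm (\<mu> - c i) \<le> R"
  shows "\<exists>A \<in> sets std_gaussian.
           measure std_gaussian A \<ge> 1 - \<epsilon> \<and>
           (\<forall>\<xi>\<in>A. \<forall>i'<k. \<mu> + \<sigma> *\<^sub>R \<xi> \<in> V i' \<longrightarrow>
              norm (\<mu> - c i') \<le> 3 * R + 2 * sqrt 2 * \<sigma> * sqrt (ln (real k / \<epsilon>)))"
proof -
  obtain i where i: "i < k" "norm (\<mu> - c i) \<le> R"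
    using assms(7) by blast
  have ln_pos: "ln (real k / \<epsilon>) > 0"
    using assms(1,5,6) by (simp add: less_divide_eq)
  define t where "t = sqrt (2 * ln (real k / \<epsilon>))"
  have t: "t \<ge> 0" "exp (- t\<^sup>2 / 2) = \<epsilon> / real k"
    using ln_pos assms(1,5) by (auto simp: t_def exp_minus)
  define A where "A = {\<xi>. \<forall>j\<in>{..<k}. \<xi> \<bullet> sgn (c j - c i) < t}"
  have "A \<in> sets std_gaussian"
    by (simp add: std_gaussian_eq_density A_def)
  moreover have "measure std_gaussian A \<ge> 1 - \<epsilon>"
    using measure_gaussian_below_halfspaces[of "{..<k}" "\<lambda>j. sgn (c j - c i)" t] t assms(1)
    by (simp add: A_def std_gaussian_eq_density norm_sgn)
  moreover have "norm (\<mu> - c i') \<le> 3 * R + 2 * sqrt 2 * \<sigma> * sqrt (ln (real k / \<epsilon>))"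
    if "\<xi> \<in> A" "i' < k" "\<mu> + \<sigma> *\<^sub>R \<xi> \<in> V i'" for \<xi> i'
  proof -
    have "norm (\<mu> + \<sigma> *\<^sub>R \<xi> - c i') \<le> norm (\<mu> + \<sigma> *\<^sub>R \<xi> - c i)"
      using assms(2) that(2,3) i(1) unfolding voronoi_partition_def by blast
    moreover have "\<xi> \<bullet> (c i' - c i) \<le> t * norm (c i' - c i)"
      using that(1,2) by (intro inner_le_of_inner_sgn_less) (simp add: A_def)
    ultimately have "norm (\<mu> - c i') \<le> R + 2 * \<sigma> * t"
      using voronoi_center_dist_le[OF i(2)] assms(3) t(1) by simp
    moreover have "2 * \<sigma> * t = 2 * sqrt 2 * \<sigma> * sqrt (ln (real k / \<epsilon>))"
      by (simp add: t_def real_sqrt_mult)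
    ultimately show ?thesis
      using assms(4) by linarith
  qed
  ultimately show ?thesis
    by blast
qed

end
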